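(* Let $G'=(V,E')$ be a simple undirected loop-free graph with $V=\{1,\ldots,n\}$, let each pair $\{i,j\}$ of distinct nodes have a cost $c_{ij}\ge0$, let $B\ge0$, and for each $i\in V$ let $D_i=\{L_i,L_i+1,\ldots,R_i\}\subseteq\{0,\ldots,n-1\}$ be a nonempty interval. Let $H$ be the weighted graph constructed from these data as described in the context. Then $H$ has a perfect matching of total cost at most $B$ if and only if there is an edge set $E$ on $V$ with $\sum_{e\in E\triangle E'}c_e\le B$ such that in $(V,E)$ every node $i$ has degree in $D_i$.
   Context: Write $d_i$ for the degree of $i$ in $G'$. The graph $H$ is built as follows. (a) For each edge $e=\{i,i'\}\in E'$ add two nodes $y^-_{e,i},y^-_{e,i'}$ joined by an edge; for each non-edge pair $e=\{i,i'\}\notin E'$ ($i\ne i'$) add two nodes $y^+_{e,i},y^+_{e,i'}$ joined by an edge. (b) For each $i\in V$ add a set $X^+_i$ of $\min(R_i,n-d_i-1)$ nodes and a set $X^-_i$ of $\min(n-L_i-1,d_i)$ nodes; join every node of $X^+_i$ to every $y^+_{e,i}$ (over all non-edges $e$ at $i$), every node of $X^-_i$ to every $y^-_{e,i}$ (over all edges $e$ at $i$), and every node of $X^+_i$ to every node of $X^-_i$. (c) Let $\sigma_i=d_i+|X^+_i|-|X^-_i|$ (one has $L_i\le\sigma_i\le R_i$). Add a set $Z^+_i$ of $\sigma_i-L_i$ nodes joined completely to $X^+_i$, and a set $Z^-_i$ of $R_i-\sigma_i$ nodes joined completely to $X^-_i$. Add all edges among the union of all $Z^+_i,Z^-_i$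 over all $i$ (a complete graph). If the total number of nodes so far is odd, add one extra node $\hat z$ adjacent to all nodes of all $Z^+_i,Z^-_i$. (d) Costs: for each $e=\{i,i'\}\in E'$, each edge between $y^-_{e,i}$ and a node of $X^-_i$ and between $y^-_{e,i'}$ and a node of $X^-_{i'}$ has cost $c_e/2$; for each $e=\{i,i'\}\notin E'$, each edge between $y^+_{e,i}$ and a node of $X^+_i$ and between $y^+_{e,i'}$ and a node of $X^+_{i'}$ has cost $c_e/2$; all other edges of $H$ have cost $0$. The cost of a matching is the sum of the costs of its edges. For edge sets, $c_{ij}$ is the cost of removing $\{i,j\}$ if it lies in $E'$ and of adding it otherwise; $E\triangle E'$ is the symmetric difference. *)

theory Defs
  imports Complex_Main
begin

text \<open>Nodes of the auxiliary graph H.  Ym e i is y^-_{e,i}, Yp e i is y^+_{e,i};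
  Xp i k is the k-th node of X^+_i (k < |X^+_i|), etc.; Zhat is the extra node.\<close>
datatype hnode = Ym "nat set" nat | Yp "nat set" nat | Xp nat nat | Xm nat nat
  | Zp nat nat | Zm nat nat | Zhat

definition pairs :: "nat \<Rightarrow> nat set set" where
  "pairs n = {{i, j} | i j. i \<in> {1..n} \<and> j \<in> {1..n} \<and> i \<noteq> j}"

definition gdeg :: "nat set set \<Rightarrow> nat \<Rightarrow> nat" where
  "gdeg E i = card {j. {i, j} \<in> E}"

definition nxp :: "nat \<Rightarrow> nat set set \<Rightarrow> (nat \<Rightarrow> nat) \<Rightarrow> nat \<Rightarrow> nat" where
  "nxp n E R i = min (R i) (n - gdeg E i - 1)"

definition nxm :: "nat \<Rightarrow> nat set set \<Rightarrow> (nat \<Rightarrow> nat) \<Rightarrow> nat \<Rightarrow> nat" where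
  "nxm n E L i = min (n - L i - 1) (gdeg E i)"

definition sig :: "nat \<Rightarrow> nat set set \<Rightarrow> (nat \<Rightarrow> nat) \<Rightarrow> (nat \<Rightarrow> nat) \<Rightarrow> nat \<Rightarrow> int" where
  "sig n E L R i = int (gdeg E i) + int (nxp n E R i) - int (nxm n E L i)"

definition nzp :: "nat \<Rightarrow> nat set set \<Rightarrow> (nat \<Rightarrow> nat) \<Rightarrow> (nat \<Rightarrow> nat) \<Rightarrow> nat \<Rightarrow> nat" where
  "nzp n E L R i = nat (sig n E L R i - int (L i))"

definition nzm :: "nat \<Rightarrow> nat set set \<Rightarrow> (nat \<Rightarrow> nat) \<Rightarrow> (nat \<Rightarrow> nat) \<Rightarrow> nat \<Rightarrow> nat" where
  "nzm n E L R i = nat (int (R i) - sig n E L R i)"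

definition Ynodes :: "nat \<Rightarrow> nat set set \<Rightarrow> hnode set" where
  "Ynodes n E = {Ym e i | e i. e \<in> E \<and> i \<in> e} \<union> {Yp e i | e i. e \<in> pairs n - E \<and> i \<in> e}"

definition Xnodes :: "nat \<Rightarrow> nat set set \<Rightarrow> (nat \<Rightarrow> nat) \<Rightarrow> (nat \<Rightarrow> nat) \<Rightarrow> hnode set" where
  "Xnodes n E L R = {Xp i k | i k. i \<in> {1..n} \<and> k < nxp n E R i}
                  \<union> {Xm i k | i k. i \<in> {1..n} \<and> k < nxm n E L i}"

definition Znodes :: "nat \<Rightarrow> nat set set \<Rightarrow> (nat \<Rightarrow> nat) \<Rightarrow> (nat \<Rightarrow> nat) \<Rightarrow> hnode set" where
  "Znodes n E L R = {Zp i k | i k. i \<in> {1..n} \<and> k < nzp n E L R i}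
                  \<union> {Zm i k | i k. i \<in> {1..n} \<and> k < nzm n E L R i}"

definition HV0 :: "nat \<Rightarrow> nat set set \<Rightarrow> (nat \<Rightarrow> nat) \<Rightarrow> (nat \<Rightarrow> nat) \<Rightarrow> hnode set" where
  "HV0 n E L R = Ynodes n E \<union> Xnodes n E L R \<union> Znodes n E L R"

definition HV :: "nat \<Rightarrow> nat set set \<Rightarrow> (nat \<Rightarrow> nat) \<Rightarrow> (nat \<Rightarrow> nat) \<Rightarrow> hnode set" where
  "HV n E L R = HV0 n E L R \<union> (if odd (card (HV0 n E L R)) then {Zhat} else {})"

definition HE :: "nat \<Rightarrow> nat set set \<Rightarrow> (nat \<Rightarrow> nat) \<Rightarrow> (nat \<Rightarrow> nat) \<Rightarrow> hnode set set" where
  "HE n E L R =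
     {{Ym e i, Ym e j} | e i j. e \<in> E \<and> e = {i, j} \<and> i \<noteq> j}
   \<union> {{Yp e i, Yp e j} | e i j. e \<in> pairs n - E \<and> e = {i, j} \<and> i \<noteq> j}
   \<union> {{Xp i k, Yp e i} | i k e. Xp i k \<in> HV0 n E L R \<and> Yp e i \<in> HV0 n E L R}
   \<union> {{Xm i k, Ym e i} | i k e. Xm i k \<in> HV0 n E L R \<and> Ym e i \<in> HV0 n E L R}
   \<union> {{Xp i k, Xm i l} | i k l. Xp i k \<in> HV0 n E L R \<and> Xm i l \<in> HV0 n E L R}
   \<union> {{Zp i k, Xp i l} | i k l. Zp i k \<in> HV0 n E L R \<and> Xp i l \<in> HV0 n E L R}
   \<union> {{Zm i k, Xm i l} | i k l. Zm i k \<in> HV0 n E L R \<and> Xm i l \<in> HV0 n E L R}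
   \<union> {{z, z'} | z z'. z \<in> Znodes n E L R \<and> z' \<in> Znodes n E L R \<and> z \<noteq> z'}
   \<union> {{Zhat, z} | z. Zhat \<in> HV n E L R \<and> z \<in> Znodes n E L R}"

fun hc :: "(nat set \<Rightarrow> real) \<Rightarrow> hnode \<Rightarrow> hnode \<Rightarrow> real" where
  "hc c (Xm i k) (Ym e j) = c e / 2"
| "hc c (Xp i k) (Yp e j) = c e / 2"
| "hc c _ _ = 0"

text \<open>Cost of an edge {u,v} (u \<noteq> v) is hc u v + hc v u, i.e. the cost given in (d).\<close>
definition ecost :: "(nat set \<Rightarrow> real) \<Rightarrow> hnode set \<Rightarrow> real" where
  "ecost c f = (\<Sum>u\<in>f. \<Sum>v\<in>f. hc c u v)"

definition mcost :: "(nat set \<Rightarrow> real) \<Rightarrow> hnode set set \<Rightarrow> real" where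
  "mcost c M = (\<Sum>f\<in>M. ecost c f)"

definition perfect_matching :: "'a set \<Rightarrow> 'a set set \<Rightarrow> 'a set set \<Rightarrow> bool" where
  "perfect_matching V Ed M \<longleftrightarrow> M \<subseteq> Ed \<and> (\<forall>v\<in>V. \<exists>!f. f \<in> M \<and> v \<in> f)"

end

theory Submission
  imports Defs
begin

(*
  A perfect matching of H is the same as a fixed-point-free involution \<pi> of its nodes along
  edges.  From \<pi> one reads off E: an edge e of G' is kept iff its two y\<^sup>- nodes are matched
  to each other, a non-edge is added iff its two y\<^sup>+ nodes are matched into X\<^sup>+.  The
  costly X-Y edges of the matching are then exactly the two halves of c\<^sub>e for every modified
  pair e, so the matching costs exactly \<Sum>\<^bsub>E \<triangle> E'\<^esub> c.  At a node i, counting the partners of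
  X\<^sup>+\<^sub>i and X\<^sup>-\<^sub>i gives deg\<^sub>E(i) = \<sigma>\<^sub>i - |\<pi>(X\<^sup>+\<^sub>i) \<inter> Z\<^sup>+\<^sub>i| + |\<pi>(X\<^sup>-\<^sub>i) \<inter> Z\<^sup>-\<^sub>i|, and the sizes \<sigma>\<^sub>i - L\<^sub>i and
  R\<^sub>i - \<sigma>\<^sub>i of Z\<^sup>+\<^sub>i and Z\<^sup>-\<^sub>i put this into [L\<^sub>i, R\<^sub>i].

  Conversely, given E, the y-nodes of modified pairs at i are matched into initial blocks of
  X\<^sup>+\<^sub>i and X\<^sup>-\<^sub>i, the surplus |\<sigma>\<^sub>i - deg\<^sub>E(i)| is absorbed by Z\<^sup>+\<^sub>i or Z\<^sup>-\<^sub>i, and the remaining nodes of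
  X\<^sup>+\<^sub>i and X\<^sup>-\<^sub>i are matched to each other.  The nodes left over are Z-nodes or the extra
  node, which are pairwise adjacent, and there are evenly many of them, so they can be paired
  arbitrarily.
*)

section \<open>Perfect matchings as involutions\<close>

definition fixpoint_free_involution_on :: "'a set \<Rightarrow> ('a \<Rightarrow> 'a) \<Rightarrow> bool" where
  "fixpoint_free_involution_on V \<pi> \<longleftrightarrow> (\<forall>v\<in>V. \<pi> v \<in> V \<and> \<pi> v \<noteq> v \<and> \<pi> (\<pi> v) = v)"

definition matching_involution :: "'a set \<Rightarrow> 'a set set \<Rightarrow> ('a \<Rightarrow> 'a) \<Rightarrow> bool" where
  "matching_involution V Ed \<pi> \<longleftrightarrow> fixpoint_free_involution_on V \<pi> \<and> (\<forall>v\<in>V. {v, \<pi> v} \<in> Ed)"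

lemma perfect_matching_of_involution:
  assumes "matching_involution V Ed \<pi>"
  shows "perfect_matching V Ed ((\<lambda>v. {v, \<pi> v}) ` V)"
  unfolding perfect_matching_def
proof (intro conjI ballI)
  show "(\<lambda>v. {v, \<pi> v}) ` V \<subseteq> Ed"
    using assms by (auto simp: matching_involution_def)
  have invol: "\<forall>u\<in>V. \<pi> (\<pi> u) = u"
    using assms by (simp add: matching_involution_def fixpoint_free_involution_on_def)
  fix v assume v: "v \<in> V"
  show "\<exists>!f. f \<in> (\<lambda>v. {v, \<pi> v}) ` V \<and> v \<in> f"
  proof (rule ex1I[of _ "{v, \<pi> v}"])
    show "{v, \<pi> v} \<in> (\<lambda>v. {v, \<pi> v}) ` V \<and> v \<in> {v, \<pi> v}" using v by blast
    fix f assume "f \<in> (\<lambda>v. {v, \<pi> v}) ` V \<and> v \<in> f"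
    then obtain u where "u \<in> V" "f = {u, \<pi> u}" "v = u \<or> v = \<pi> u" by blast
    then show "f = {v, \<pi> v}" using invol by (auto simp: insert_commute)
  qed
qed

lemma involution_of_perfect_matching:
  assumes pm: "perfect_matching V Ed M"
    and edges: "\<forall>f\<in>Ed. card f = 2 \<and> f \<subseteq> V"
  obtains \<pi> where "matching_involution V Ed \<pi>" and "M = (\<lambda>v. {v, \<pi> v}) ` V"
proof -
  have M_Ed: "M \<subseteq> Ed" and unique: "\<And>v. v \<in> V \<Longrightarrow> \<exists>!f. f \<in> M \<and> v \<in> f"
    using pm unfolding perfect_matching_def by auto
  define \<pi> where "\<pi> v = the_elem ((THE f. f \<in> M \<and> v \<in> f) - {v})" for v
  have cover: "(THE f. f \<in> M \<and> v \<in> f) = f" if "f \<in> M" "v \<in> f" "v \<in> V" for v f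
    by (rule the1_equality[OF unique[OF that(3)]]) (use that in blast)
  have edge: "{v, \<pi> v} \<in> M \<and> \<pi> v \<in> V \<and> \<pi> v \<noteq> v" if v: "v \<in> V" for v
  proof -
    obtain f where f: "f \<in> M" "v \<in> f" using unique[OF v] by blast
    then have "card f = 2" "f \<subseteq> V" using M_Ed edges by auto
    then obtain a b where ab: "f = {a, b}" "a \<noteq> b" by (auto simp: card_2_iff)
    define w where "w = (if v = a then b else a)"
    have w: "f = {v, w}" "w \<noteq> v" "w \<in> V"
      using ab f(2) \<open>f \<subseteq> V\<close> unfolding w_def by (cases "v = a"; simp add: insert_commute)+
    have "\<pi> v = w" unfolding \<pi>_def cover[OF f v] w(1) using w(2) by auto
    then show ?thesis using f w by simp
  qed
  have invol: "\<pi> (\<pi> v) = v" if "v \<in> V" for v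
  proof -
    have "{\<pi> v, \<pi> (\<pi> v)} = {v, \<pi> v}"
      using edge[OF that] edge[of "\<pi> v"] unique[of "\<pi> v"] by blast
    then show ?thesis using edge[OF that] by (auto simp: doubleton_eq_iff)
  qed
  have "matching_involution V Ed \<pi>"
    using edge invol M_Ed
    by (auto simp: matching_involution_def fixpoint_free_involution_on_def)
  moreover have "M = (\<lambda>v. {v, \<pi> v}) ` V"
  proof
    show "(\<lambda>v. {v, \<pi> v}) ` V \<subseteq> M" using edge by auto
    show "M \<subseteq> (\<lambda>v. {v, \<pi> v}) ` V"
    proof
      fix f assume f: "f \<in> M"
      then have "card f = 2" "f \<subseteq> V" using M_Ed edges by auto
      then obtain a where "a \<in> f" "a \<in> V" by (metis card_2_iff insertI1 subsetD)
      then have "f = {a, \<pi> a}" using unique[of a] f edge[of a] by blast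
      then show "f \<in> (\<lambda>v. {v, \<pi> v}) ` V" using \<open>a \<in> V\<close> by blast
    qed
  qed
  ultimately show ?thesis using that by blast
qed

lemma sum_pairs_of_involution:
  assumes "finite V" and "fixpoint_free_involution_on V \<pi>"
  shows "(\<Sum>f\<in>(\<lambda>v. {v, \<pi> v}) ` V. \<Sum>u\<in>f. h u) = (\<Sum>v\<in>V. h v)"
proof -
  have "\<Union> ((\<lambda>v. {v, \<pi> v}) ` V) = V"
    using assms(2) by (auto simp: fixpoint_free_involution_on_def)
  moreover have "{u, \<pi> u} = {v, \<pi> v}" if uv: "u \<in> V" "v \<in> V" "{u, \<pi> u} \<inter> {v, \<pi> v} \<noteq> {}" for u v
  proof -
    obtain x where "x \<in> {u, \<pi> u}" "x \<in> {v, \<pi> v}" using uv(3) by blast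
    moreover have "\<pi> (\<pi> u) = u" "\<pi> (\<pi> v) = v"
      using uv(1,2) assms(2) by (auto simp: fixpoint_free_involution_on_def)
    ultimately have "u = v \<or> u = \<pi> v" by (metis insertE singletonD)
    then show ?thesis using \<open>\<pi> (\<pi> v) = v\<close> by (metis insert_commute)
  qed
  then have "pairwise disjnt ((\<lambda>v. {v, \<pi> v}) ` V)"
    unfolding pairwise_def disjnt_def by blast
  ultimately show ?thesis
    using sum.Union_disjoint[of "(\<lambda>v. {v, \<pi> v}) ` V" h] assms(1)
    by (auto simp: pairwise_def disjnt_def)
qed

lemma mcost_involution:
  assumes "finite V" and inv: "fixpoint_free_involution_on V \<pi>"
  shows "mcost c ((\<lambda>v. {v, \<pi> v}) ` V) = (\<Sum>v\<in>V. hc c v (\<pi> v))"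
proof -
  have hc_diag: "hc c u u = 0" for u by (cases u) auto
  have "ecost c f = (\<Sum>u\<in>f. hc c u (\<pi> u))" if "f \<in> (\<lambda>v. {v, \<pi> v}) ` V" for f
    using that inv by (auto simp: ecost_def fixpoint_free_involution_on_def hc_diag)
  then show ?thesis
    unfolding mcost_def using sum_pairs_of_involution[OF assms] by simp
qed

lemma even_card_if_fixpoint_free_involution:
  assumes "finite S" and "fixpoint_free_involution_on S \<pi>"
  shows "even (card S)"
  using assms
proof (induction "card S" arbitrary: S rule: less_induct)
  case less
  show ?case
  proof (cases "S = {}")
    case False
    then obtain a where a: "a \<in> S" by blast
    let ?S = "S - {a, \<pi> a}"
    have pair: "{a, \<pi> a} \<subseteq> S" "card {a, \<pi> a} = 2"
      using less.prems(2) a by (auto simp: fixpoint_free_involution_on_def)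
    have "fixpoint_free_involution_on ?S \<pi>"
      unfolding fixpoint_free_involution_on_def
    proof
      fix v assume v: "v \<in> ?S"
      have "\<pi> (\<pi> v) = v" "\<pi> (\<pi> a) = a"
        using v a less.prems(2) unfolding fixpoint_free_involution_on_def by auto
      then have "\<pi> v \<noteq> a" "\<pi> v \<noteq> \<pi> a" using v by (metis DiffD2 insertCI)+
      then show "\<pi> v \<in> ?S \<and> \<pi> v \<noteq> v \<and> \<pi> (\<pi> v) = v"
        using v less.prems(2) unfolding fixpoint_free_involution_on_def by auto
    qed
    moreover have "card ?S = card S - 2" "card S \<ge> 2"
      using less.prems(1) pair card_mono[OF less.prems(1) pair(1)]
      by (simp_all add: card_Diff_subset)
    ultimately have "even (card ?S)" using less.hyps[of ?S] less.prems(1) by simp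
    with \<open>card ?S = card S - 2\<close> \<open>card S \<ge> 2\<close> show ?thesis by simp
  qed simp
qed

lemma fixpoint_free_involution_exists:
  assumes "finite W" and "even (card W)"
  shows "\<exists>\<rho>. fixpoint_free_involution_on W \<rho>"
  using assms
proof (induction "card W" arbitrary: W rule: less_induct)
  case less
  show ?case
  proof (cases "W = {}")
    case True then show ?thesis by (auto simp: fixpoint_free_involution_on_def)
  next
    case False
    then obtain a where a: "a \<in> W" by blast
    with less.prems have "W \<noteq> {a}" by auto
    with a obtain b where b: "b \<in> W" "b \<noteq> a" by blast
    let ?W = "W - {a, b}"
    have "card ?W = card W - 2" "card W \<ge> 2"
      using less.prems(1) a b card_mono[of W "{a, b}"] by (simp_all add: card_Diff_subset)
    then obtain \<rho> where \<rho>: "fixpoint_free_involution_on ?W \<rho>"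
      using less.hyps[of ?W] less.prems by auto
    define \<sigma> where "\<sigma> w = (if w = a then b else if w = b then a else \<rho> w)" for w
    have "fixpoint_free_involution_on W \<sigma>"
      using \<rho> a b unfolding \<sigma>_def fixpoint_free_involution_on_def by auto
    then show ?thesis by blast
  qed
qed

lemma card_partner_swap:
  assumes "\<forall>v\<in>S \<union> T. \<pi> (\<pi> v) = v"
  shows "card {v\<in>S. \<pi> v \<in> T} = card {w\<in>T. \<pi> w \<in> S}"
proof -
  have "bij_betw \<pi> {v\<in>S. \<pi> v \<in> T} {w\<in>T. \<pi> w \<in> S}"
    by (rule bij_betw_byWitness[of _ \<pi>]) (use assms in auto)
  then show ?thesis by (rule bij_betw_same_card)
qed

lemma card_split_by_partner:
  assumes "finite X" and "\<forall>v\<in>X. \<pi> v \<in> A \<union> B \<union> C"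
    and "A \<inter> B = {}" "A \<inter> C = {}" "B \<inter> C = {}"
  shows "card X = card {v\<in>X. \<pi> v \<in> A} + card {v\<in>X. \<pi> v \<in> B} + card {v\<in>X. \<pi> v \<in> C}"
proof -
  have "X = ({v\<in>X. \<pi> v \<in> A} \<union> {v\<in>X. \<pi> v \<in> B}) \<union> {v\<in>X. \<pi> v \<in> C}"
    using assms(2) by blast
  also have "card \<dots> = card ({v\<in>X. \<pi> v \<in> A} \<union> {v\<in>X. \<pi> v \<in> B}) + card {v\<in>X. \<pi> v \<in> C}"
    by (rule card_Un_disjoint) (use assms in auto)
  also have "card ({v\<in>X. \<pi> v \<in> A} \<union> {v\<in>X. \<pi> v \<in> B}) = card {v\<in>X. \<pi> v \<in> A} + card {v\<in>X. \<pi> v \<in> B}"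
    by (rule card_Un_disjoint) (use assms in auto)
  finally show ?thesis .
qed

lemma extend_partial_involution:
  assumes fin: "finite V" and even: "even (card V)"
    and moved: "\<forall>v\<in>V. p v \<noteq> v \<longrightarrow> p v \<in> V \<and> p (p v) = v \<and> {v, p v} \<in> Ed"
    and fixed: "\<forall>v\<in>V. \<forall>w\<in>V. p v = v \<longrightarrow> p w = w \<longrightarrow> v \<noteq> w \<longrightarrow> {v, w} \<in> Ed"
  obtains \<pi> where "matching_involution V Ed \<pi>" and "\<forall>v\<in>V. p v \<noteq> v \<longrightarrow> \<pi> v = p v"
proof -
  define S where "S = {v\<in>V. p v \<noteq> v}"
  have S_inv: "fixpoint_free_involution_on S p"
    using moved unfolding S_def fixpoint_free_involution_on_def by auto
  have "S \<subseteq> V" unfolding S_def by blast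
  then have "even (card (V - S))"
    using even_card_if_fixpoint_free_involution[OF finite_subset[OF _ fin] S_inv] even fin
    by (simp add: card_Diff_subset card_mono finite_subset)
  then obtain \<rho> where \<rho>: "fixpoint_free_involution_on (V - S) \<rho>"
    using fixpoint_free_involution_exists fin by blast
  define \<pi> where "\<pi> v = (if p v = v then \<rho> v else p v)" for v
  have \<rho>_fixed: "\<rho> v \<in> V \<and> p (\<rho> v) = \<rho> v \<and> \<rho> v \<noteq> v \<and> \<rho> (\<rho> v) = v \<and> {v, \<rho> v} \<in> Ed"
    if "v \<in> V" "p v = v" for v
  proof -
    have "\<rho> v \<in> V - S \<and> \<rho> v \<noteq> v \<and> \<rho> (\<rho> v) = v"
      using \<rho> that unfolding fixpoint_free_involution_on_def S_def by auto
    then show ?thesis using fixed that unfolding S_def by auto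
  qed
  have "matching_involution V Ed \<pi>"
    using moved \<rho>_fixed
    unfolding matching_involution_def fixpoint_free_involution_on_def \<pi>_def by auto
  moreover have "\<forall>v\<in>V. p v \<noteq> v \<longrightarrow> \<pi> v = p v" unfolding \<pi>_def by simp
  ultimately show ?thesis using that by blast
qed

section \<open>Degrees in graphs on {1..n}\<close>

definition other_end :: "'a set \<Rightarrow> 'a \<Rightarrow> 'a" where
  "other_end e i = the_elem (e - {i})"

lemma other_end_doubleton [simp]:
  "i \<noteq> j \<Longrightarrow> other_end {i, j} i = j" "i \<noteq> j \<Longrightarrow> other_end {i, j} j = i"
  by (simp_all add: other_end_def insert_Diff_if)

lemma other_end_card_2:
  assumes "card e = 2" and "i \<in> e"
  shows "e = {i, other_end e i}" "other_end e i \<noteq> i" "other_end e (other_end e i) = i"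
proof -
  obtain j where j: "e = {i, j}" "j \<noteq> i"
    using assms by (auto simp: card_2_iff doubleton_eq_iff)
  then show "e = {i, other_end e i}" "other_end e i \<noteq> i" "other_end e (other_end e i) = i"
    by simp_all
qed

lemma pairsE:
  assumes "e \<in> pairs n"
  obtains i j where "e = {i, j}" "i \<noteq> j" "i \<in> {1..n}" "j \<in> {1..n}"
  using assms unfolding pairs_def by blast

lemma doubleton_in_pairs: "i \<in> {1..n} \<Longrightarrow> j \<in> {1..n} \<Longrightarrow> i \<noteq> j \<Longrightarrow> {i, j} \<in> pairs n"
  unfolding pairs_def by blast

lemma pairs_subset: "e \<in> pairs n \<Longrightarrow> e \<subseteq> {1..n}"
  by (auto elim!: pairsE)

lemma card_pairs: "e \<in> pairs n \<Longrightarrow> card e = 2"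
  by (auto elim!: pairsE)

lemma finite_pairs: "finite (pairs n)"
proof (rule finite_subset)
  show "pairs n \<subseteq> Pow {1..n}" using pairs_subset by blast
qed simp

lemma finite_neighbours:
  assumes "F \<subseteq> pairs n"
  shows "finite {j. {i, j} \<in> F}"
proof (rule finite_subset)
  show "{j. {i, j} \<in> F} \<subseteq> {1..n}" using assms pairs_subset by blast
qed simp

lemma gdeg_eq_card_incident:
  assumes "F \<subseteq> pairs n"
  shows "gdeg F i = card {e\<in>F. i \<in> e}"
proof -
  have "{i, other_end e i} = e" if "e \<in> F" "i \<in> e" for e
    using other_end_card_2(1)[OF card_pairs] that assms by blast
  moreover have "other_end {i, j} i = j" if "{i, j} \<in> F" for j
    using card_pairs[of "{i, j}" n] that assms by (cases "i = j") auto
  ultimately have "bij_betw (\<lambda>j. {i, j}) {j. {i, j} \<in> F} {e\<in>F. i \<in> e}"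
    by (intro bij_betw_byWitness[of _ "\<lambda>e. other_end e i"]) auto
  then show ?thesis unfolding gdeg_def by (rule bij_betw_same_card)
qed

lemma gdeg_Un_disjoint:
  assumes "F \<inter> G = {}" and "F \<union> G \<subseteq> pairs n"
  shows "gdeg (F \<union> G) i = gdeg F i + gdeg G i"
proof -
  have "{j. {i, j} \<in> F \<union> G} = {j. {i, j} \<in> F} \<union> {j. {i, j} \<in> G}" by blast
  moreover have "finite {j. {i, j} \<in> F}" "finite {j. {i, j} \<in> G}"
    using assms(2) by (auto intro: finite_neighbours)
  ultimately show ?thesis
    unfolding gdeg_def using assms(1) by (auto intro: card_Un_disjoint)
qed

lemma gdeg_mono: "F \<subseteq> G \<Longrightarrow> G \<subseteq> pairs n \<Longrightarrow> gdeg F i \<le> gdeg G i"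
  unfolding gdeg_def by (rule card_mono) (auto intro: finite_neighbours)

lemma gdeg_pairs:
  assumes i: "i \<in> {1..n}"
  shows "gdeg (pairs n) i = n - 1"
proof -
  have "{j. {i, j} \<in> pairs n} = {1..n} - {i}"
  proof
    show "{j. {i, j} \<in> pairs n} \<subseteq> {1..n} - {i}"
    proof
      fix j assume "j \<in> {j. {i, j} \<in> pairs n}"
      then show "j \<in> {1..n} - {i}"
        using pairs_subset[of "{i, j}" n] card_pairs[of "{i, j}" n] by (cases "i = j") auto
    qed
    show "{1..n} - {i} \<subseteq> {j. {i, j} \<in> pairs n}" using i doubleton_in_pairs by blast
  qed
  then show ?thesis unfolding gdeg_def using i by simp
qed

lemma gdeg_disjoint_le:
  assumes "F \<inter> G = {}" and "F \<union> G \<subseteq> pairs n" and "i \<in> {1..n}"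
  shows "gdeg F i + gdeg G i \<le> n - 1"
proof -
  have "gdeg F i + gdeg G i = gdeg (F \<union> G) i" using gdeg_Un_disjoint[OF assms(1,2)] by simp
  also have "\<dots> \<le> gdeg (pairs n) i" using gdeg_mono[OF assms(2) order_refl] .
  also have "\<dots> = n - 1" using gdeg_pairs[OF assms(3)] .
  finally show ?thesis .
qed

lemma gdeg_le: "F \<subseteq> pairs n \<Longrightarrow> i \<in> {1..n} \<Longrightarrow> gdeg F i \<le> n - 1"
  using gdeg_disjoint_le[of F "{}"] by (simp add: gdeg_def)

lemma gdeg_add_remove:
  assumes "E \<subseteq> pairs n" and "E' \<subseteq> pairs n"
  shows "gdeg E i + gdeg (E' - E) i = gdeg E' i + gdeg (E - E') i"
proof -
  have "gdeg ((E \<inter> E') \<union> (E - E')) i = gdeg (E \<inter> E') i + gdeg (E - E') i"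
    "gdeg ((E \<inter> E') \<union> (E' - E)) i = gdeg (E \<inter> E') i + gdeg (E' - E) i"
    by (rule gdeg_Un_disjoint; use assms in blast)+
  moreover have "(E \<inter> E') \<union> (E - E') = E" "(E \<inter> E') \<union> (E' - E) = E'" by blast+
  ultimately show ?thesis by simp
qed

section \<open>The auxiliary graph H\<close>

fun y_edge :: "hnode \<Rightarrow> nat set" where
  "y_edge (Ym e _) = e"
| "y_edge (Yp e _) = e"
| "y_edge _ = {}"

locale deg_constrained =
  fixes n :: nat and E' :: "nat set set" and L R :: "nat \<Rightarrow> nat"
  assumes E'_sub: "E' \<subseteq> pairs n"
    and bounds: "\<forall>i\<in>{1..n}. L i \<le> R i \<and> R i \<le> n - 1"
begin

abbreviation "V \<equiv> HV n E' L R"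
abbreviation "V0 \<equiv> HV0 n E' L R"
abbreviation "Ed \<equiv> HE n E' L R"
abbreviation "Z \<equiv> Znodes n E' L R"
abbreviation "xp \<equiv> nxp n E' R"
abbreviation "xm \<equiv> nxm n E' L"
abbreviation "zp \<equiv> nzp n E' L R"
abbreviation "zm \<equiv> nzm n E' L R"
abbreviation "\<sigma> \<equiv> sig n E' L R"

lemma Zhat_notin_HV0: "Zhat \<notin> V0"
  by (simp add: HV0_def Ynodes_def Xnodes_def Znodes_def)

lemma HV0_simps:
  "Ym e i \<in> V0 \<longleftrightarrow> e \<in> E' \<and> i \<in> e"
  "Yp e i \<in> V0 \<longleftrightarrow> e \<in> pairs n - E' \<and> i \<in> e"
  "Xp i k \<in> V0 \<longleftrightarrow> i \<in> {1..n} \<and> k < xp i"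
  "Xm i k \<in> V0 \<longleftrightarrow> i \<in> {1..n} \<and> k < xm i"
  "Zp i k \<in> V0 \<longleftrightarrow> i \<in> {1..n} \<and> k < zp i"
  "Zm i k \<in> V0 \<longleftrightarrow> i \<in> {1..n} \<and> k < zm i"
  by (auto simp: HV0_def Ynodes_def Xnodes_def Znodes_def)

lemma HV_simps:
  "Ym e i \<in> V \<longleftrightarrow> e \<in> E' \<and> i \<in> e"
  "Yp e i \<in> V \<longleftrightarrow> e \<in> pairs n - E' \<and> i \<in> e"
  "Xp i k \<in> V \<longleftrightarrow> i \<in> {1..n} \<and> k < xp i"
  "Xm i k \<in> V \<longleftrightarrow> i \<in> {1..n} \<and> k < xm i"
  "Zp i k \<in> V \<longleftrightarrow> i \<in> {1..n} \<and> k < zp i"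
  "Zm i k \<in> V \<longleftrightarrow> i \<in> {1..n} \<and> k < zm i"
  using HV0_simps Zhat_notin_HV0 by (auto simp: HV_def)

lemma Znodes_subset_HV: "Z \<subseteq> V"
  by (auto simp: HV_def HV0_def)

lemma Zhat_neq_Znodes: "z \<in> Z \<Longrightarrow> Zhat \<noteq> z"
  by (auto simp: Znodes_def)

lemma finite_HV0: "finite V0"
proof -
  have "Ynodes n E' \<subseteq> (\<lambda>(e, i). Ym e i) ` (pairs n \<times> {1..n}) \<union> (\<lambda>(e, i). Yp e i) ` (pairs n \<times> {1..n})"
    using E'_sub pairs_subset by (fastforce simp: Ynodes_def)
  then have "finite (Ynodes n E')"
    by (rule finite_subset) (simp add: finite_pairs)
  moreover have "Xnodes n E' L R = (\<Union>i\<in>{1..n}. Xp i ` {..<xp i}) \<union> (\<Union>i\<in>{1..n}. Xm i ` {..<xm i})"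
    "Z = (\<Union>i\<in>{1..n}. Zp i ` {..<zp i}) \<union> (\<Union>i\<in>{1..n}. Zm i ` {..<zm i})"
    by (auto simp: Xnodes_def Znodes_def)
  ultimately show ?thesis unfolding HV0_def by simp
qed

lemma finite_HV: "finite V"
  using finite_HV0 by (simp add: HV_def)

lemma even_card_HV: "even (card V)"
  using finite_HV0 Zhat_notin_HV0 by (simp add: HV_def)

lemma HE_edge_card_2:
  assumes "f \<in> Ed"
  shows "card f = 2 \<and> f \<subseteq> V"
  using assms unfolding HE_def
  by (elim UnE CollectE exE conjE;
      simp add: HV_simps HV0_simps subsetD[OF Znodes_subset_HV] Zhat_neq_Znodes)

lemma HE_intros:
  "e \<in> E' \<Longrightarrow> i \<noteq> j \<Longrightarrow> e = {i, j} \<Longrightarrow> {Ym e i, Ym e j} \<in> Ed"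
  "e \<in> pairs n - E' \<Longrightarrow> i \<noteq> j \<Longrightarrow> e = {i, j} \<Longrightarrow> {Yp e i, Yp e j} \<in> Ed"
  "Xp i k \<in> V0 \<Longrightarrow> Yp e i \<in> V0 \<Longrightarrow> {Xp i k, Yp e i} \<in> Ed"
  "Xm i k \<in> V0 \<Longrightarrow> Ym e i \<in> V0 \<Longrightarrow> {Xm i k, Ym e i} \<in> Ed"
  "Xp i k \<in> V0 \<Longrightarrow> Xm i l \<in> V0 \<Longrightarrow> {Xp i k, Xm i l} \<in> Ed"
  "Zp i k \<in> V0 \<Longrightarrow> Xp i l \<in> V0 \<Longrightarrow> {Zp i k, Xp i l} \<in> Ed"
  "Zm i k \<in> V0 \<Longrightarrow> Xm i l \<in> V0 \<Longrightarrow> {Zm i k, Xm i l} \<in> Ed"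
  "z \<in> Z \<Longrightarrow> z' \<in> Z \<Longrightarrow> z \<noteq> z' \<Longrightarrow> {z, z'} \<in> Ed"
  "Zhat \<in> V \<Longrightarrow> z \<in> Z \<Longrightarrow> {Zhat, z} \<in> Ed"
  unfolding HE_def by (intro UnI1 UnI2 CollectI exI conjI refl; simp)+

lemma HE_neighbours:
  "{Ym e i, w} \<in> Ed \<Longrightarrow> (\<exists>j. w = Ym e j \<and> e = {i, j} \<and> i \<noteq> j) \<or> (\<exists>k. w = Xm i k)"
  "{Yp e i, w} \<in> Ed \<Longrightarrow> (\<exists>j. w = Yp e j \<and> e = {i, j} \<and> i \<noteq> j) \<or> (\<exists>k. w = Xp i k)"
  "{Xp i k, w} \<in> Ed \<Longrightarrow> (\<exists>e. w = Yp e i) \<or> (\<exists>l. w = Xm i l) \<or> (\<exists>l. w = Zp i l)"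
  "{Xm i k, w} \<in> Ed \<Longrightarrow> (\<exists>e. w = Ym e i) \<or> (\<exists>l. w = Xp i l) \<or> (\<exists>l. w = Zm i l)"
  unfolding HE_def by (auto simp: doubleton_eq_iff Znodes_def)

lemma sig_bounds:
  assumes "i \<in> {1..n}"
  shows "int (L i) \<le> \<sigma> i" and "\<sigma> i \<le> int (R i)"
proof -
  have "gdeg E' i \<le> n - 1" "L i \<le> R i" "R i \<le> n - 1"
    using gdeg_le[OF E'_sub assms] bounds assms by auto
  then show "int (L i) \<le> \<sigma> i" "\<sigma> i \<le> int (R i)"
    unfolding sig_def nxp_def nxm_def by (auto simp: min_def)
qed

definition Xplus :: "nat \<Rightarrow> hnode set" where "Xplus i = Xp i ` {..<xp i}"
definition Xminus :: "nat \<Rightarrow> hnode set" where "Xminus i = Xm i ` {..<xm i}"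
definition Zplus :: "nat \<Rightarrow> hnode set" where "Zplus i = Zp i ` {..<zp i}"
definition Zminus :: "nat \<Rightarrow> hnode set" where "Zminus i = Zm i ` {..<zm i}"
definition Yplus :: "nat \<Rightarrow> hnode set" where "Yplus i = (\<lambda>e. Yp e i) ` {e\<in>pairs n - E'. i \<in> e}"
definition Yminus :: "nat \<Rightarrow> hnode set" where "Yminus i = (\<lambda>e. Ym e i) ` {e\<in>E'. i \<in> e}"

lemma card_node_blocks:
  "card (Xplus i) = xp i" "card (Xminus i) = xm i" "card (Zplus i) = zp i" "card (Zminus i) = zm i"
  by (simp_all add: Xplus_def Xminus_def Zplus_def Zminus_def card_image inj_on_def)

lemma node_blocks_subset_HV:
  assumes "i \<in> {1..n}"
  shows "Xplus i \<subseteq> V" "Xminus i \<subseteq> V" "Zplus i \<subseteq> V" "Zminus i \<subseteq> V"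
    "Yplus i \<subseteq> V" "Yminus i \<subseteq> V"
  using assms
  by (auto simp: Xplus_def Xminus_def Zplus_def Zminus_def Yplus_def Yminus_def HV_simps)

lemma sum_Ynodes:
  fixes g :: "nat set \<Rightarrow> real"
  shows "(\<Sum>w\<in>Ynodes n E'. g (y_edge w)) = (\<Sum>e\<in>pairs n. 2 * g e)"
proof -
  define ends where "ends e = (if e \<in> E' then (\<lambda>i. Ym e i) ` e else (\<lambda>i. Yp e i) ` e)" for e
  have card_ends: "card (ends e) = 2" if "e \<in> pairs n" for e
    using card_pairs[OF that] unfolding ends_def by (simp add: card_image inj_on_def)
  have y_edge_ends: "y_edge w = e" if "w \<in> ends e" for w e
    using that unfolding ends_def by (auto split: if_splits)
  have "(\<Sum>w\<in>(\<Union>e\<in>pairs n. ends e). g (y_edge w)) = (\<Sum>e\<in>pairs n. \<Sum>w\<in>ends e. g (y_edge w))"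
  proof (rule sum.UNION_disjoint[OF finite_pairs])
    show "\<forall>e\<in>pairs n. finite (ends e)"
      using card_ends by (metis card.infinite zero_neq_numeral)
    show "\<forall>e\<in>pairs n. \<forall>e'\<in>pairs n. e \<noteq> e' \<longrightarrow> ends e \<inter> ends e' = {}"
      using y_edge_ends by blast
  qed
  also have "\<dots> = (\<Sum>e\<in>pairs n. 2 * g e)"
    by (rule sum.cong[OF refl]) (simp add: card_ends y_edge_ends)
  also have "(\<Union>e\<in>pairs n. ends e) = Ynodes n E'"
    using E'_sub unfolding Ynodes_def ends_def by auto
  finally show ?thesis .
qed

end

section \<open>From a perfect matching of H to a feasible subgraph\<close>

definition graph_of_matching :: "nat \<Rightarrow> nat set set \<Rightarrow> (hnode \<Rightarrow> hnode) \<Rightarrow> nat set set" where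
  "graph_of_matching n E' \<pi> =
     {e\<in>E'. \<forall>i\<in>e. \<pi> (Ym e i) = Ym e (other_end e i)}
   \<union> {e\<in>pairs n - E'. \<forall>i\<in>e. \<pi> (Yp e i) \<noteq> Yp e (other_end e i)}"

locale deg_constrained_matching = deg_constrained +
  fixes \<pi> :: "hnode \<Rightarrow> hnode"
  assumes matching: "matching_involution V Ed \<pi>"
begin

abbreviation "G \<equiv> graph_of_matching n E' \<pi>"

lemma partner:
  assumes "v \<in> V"
  shows "\<pi> v \<in> V" "\<pi> v \<noteq> v" "\<pi> (\<pi> v) = v" "{v, \<pi> v} \<in> Ed"
  using matching assms by (auto simp: matching_involution_def fixpoint_free_involution_on_def)

lemma graph_of_matching_subset: "G \<subseteq> pairs n"
  using E'_sub by (auto simp: graph_of_matching_def)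

lemma partner_Ym:
  assumes "e \<in> E'" and "i \<in> e"
  shows "\<pi> (Ym e i) = Ym e (other_end e i) \<or> \<pi> (Ym e i) \<in> Xminus i"
proof -
  have v: "Ym e i \<in> V" using assms by (simp add: HV_simps)
  from HE_neighbours(1)[OF partner(4)[OF v]] show ?thesis
  proof (elim disjE exE conjE)
    fix k assume k: "\<pi> (Ym e i) = Xm i k"
    then show ?thesis using partner(1)[OF v] by (auto simp: HV_simps Xminus_def)
  qed simp
qed

lemma partner_Yp:
  assumes "e \<in> pairs n - E'" and "i \<in> e"
  shows "\<pi> (Yp e i) = Yp e (other_end e i) \<or> \<pi> (Yp e i) \<in> Xplus i"
proof -
  have v: "Yp e i \<in> V" using assms by (simp add: HV_simps)
  from HE_neighbours(2)[OF partner(4)[OF v]] show ?thesis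
  proof (elim disjE exE conjE)
    fix k assume k: "\<pi> (Yp e i) = Xp i k"
    then show ?thesis using partner(1)[OF v] by (auto simp: HV_simps Xplus_def)
  qed simp
qed

lemma Ym_partner_in_Xminus_iff:
  assumes e: "e \<in> E'" and i: "i \<in> e"
  shows "\<pi> (Ym e i) \<in> Xminus i \<longleftrightarrow> e \<notin> G"
proof -
  let ?j = "other_end e i"
  have "e \<in> pairs n" using e E'_sub by blast
  then have j: "e = {i, ?j}" "?j \<noteq> i" "other_end e ?j = i"
    using other_end_card_2[OF card_pairs i] by auto
  have "Ym e i \<in> V" "Ym e ?j \<in> V"
    using e i j by (simp_all add: HV_simps) blast
  then have swap: "\<pi> (Ym e ?j) = Ym e i \<longleftrightarrow> \<pi> (Ym e i) = Ym e ?j"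
    using partner(3) by metis
  have "Ym e ?j \<notin> Xminus i" by (auto simp: Xminus_def)
  then show ?thesis
    using partner_Ym[OF e i] swap e j unfolding graph_of_matching_def by auto
qed

lemma Yp_partner_in_Xplus_iff:
  assumes e: "e \<in> pairs n - E'" and i: "i \<in> e"
  shows "\<pi> (Yp e i) \<in> Xplus i \<longleftrightarrow> e \<in> G"
proof -
  let ?j = "other_end e i"
  have j: "e = {i, ?j}" "?j \<noteq> i" "other_end e ?j = i"
    using other_end_card_2[OF card_pairs i] e by auto
  have "Yp e i \<in> V" "Yp e ?j \<in> V"
    using e i j by (simp_all add: HV_simps) blast
  then have swap: "\<pi> (Yp e ?j) = Yp e i \<longleftrightarrow> \<pi> (Yp e i) = Yp e ?j"
    using partner(3) by metis
  have "Yp e ?j \<notin> Xplus i" by (auto simp: Xplus_def)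
  then show ?thesis
    using partner_Yp[OF e i] swap e j unfolding graph_of_matching_def by auto
qed

lemma hc_partner_Ynode:
  assumes "w \<in> Ynodes n E'"
  shows "hc c (\<pi> w) w = (if y_edge w \<in> (G - E') \<union> (E' - G) then c (y_edge w) / 2 else 0)"
proof -
  consider (minus) e i where "w = Ym e i" "e \<in> E'" "i \<in> e"
    | (plus) e i where "w = Yp e i" "e \<in> pairs n - E'" "i \<in> e"
    using assms unfolding Ynodes_def by blast
  then show ?thesis
  proof cases
    case minus
    then show ?thesis
      using partner_Ym[OF minus(2,3)] Ym_partner_in_Xminus_iff[OF minus(2,3)]
      by (auto simp: Xminus_def)
  next
    case plus
    then show ?thesis
      using partner_Yp[OF plus(2,3)] Yp_partner_in_Xplus_iff[OF plus(2,3)]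
      by (auto simp: Xplus_def)
  qed
qed

lemma sum_hc_partner: "(\<Sum>v\<in>V. hc c v (\<pi> v)) = (\<Sum>e\<in>(G - E') \<union> (E' - G). c e)"
proof -
  let ?D = "(G - E') \<union> (E' - G)"
  have "bij_betw \<pi> V V"
    by (rule bij_betw_byWitness[of _ \<pi>]) (auto simp: partner)
  \<comment> \<open>charge the cost of each matched edge to its endpoint in Y\<close>
  then have "(\<Sum>v\<in>V. hc c v (\<pi> v)) = (\<Sum>v\<in>V. hc c (\<pi> v) (\<pi> (\<pi> v)))"
    by (rule sum.reindex_bij_betw[symmetric])
  also have "\<dots> = (\<Sum>w\<in>V. hc c (\<pi> w) w)"
    by (rule sum.cong) (simp_all add: partner(3))
  also have "\<dots> = (\<Sum>w\<in>Ynodes n E'. hc c (\<pi> w) w)"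
  proof (rule sum.mono_neutral_right[OF finite_HV])
    show "Ynodes n E' \<subseteq> V" by (auto simp: HV_def HV0_def)
    show "\<forall>w\<in>V - Ynodes n E'. hc c (\<pi> w) w = 0"
    proof
      fix w assume "w \<in> V - Ynodes n E'"
      then show "hc c (\<pi> w) w = 0"
        by (cases w; cases "\<pi> w") (auto simp: HV_simps Ynodes_def)
    qed
  qed
  also have "\<dots> = (\<Sum>w\<in>Ynodes n E'. (\<lambda>e. if e \<in> ?D then c e / 2 else 0) (y_edge w))"
    by (rule sum.cong) (simp_all add: hc_partner_Ynode)
  also have "\<dots> = (\<Sum>e\<in>pairs n. if e \<in> ?D then c e else 0)"
    using sum_Ynodes[of "\<lambda>e. if e \<in> ?D then c e / 2 else 0"] by (simp add: if_distrib cong: if_cong)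
  also have "\<dots> = (\<Sum>e\<in>{e\<in>pairs n. e \<in> ?D}. c e)"
    by (rule sum.inter_filter[OF finite_pairs, symmetric])
  also have "{e\<in>pairs n. e \<in> ?D} = ?D"
    using graph_of_matching_subset E'_sub by blast
  finally show ?thesis .
qed

lemma mcost_matching: "mcost c ((\<lambda>v. {v, \<pi> v}) ` V) = (\<Sum>e\<in>(G - E') \<union> (E' - G). c e)"
  using mcost_involution[OF finite_HV] matching sum_hc_partner
  by (simp add: matching_involution_def)

lemma partner_Xplus:
  assumes "i \<in> {1..n}" and "v \<in> Xplus i"
  shows "\<pi> v \<in> Yplus i \<union> Xminus i \<union> Zplus i"
proof -
  obtain k where k: "v = Xp i k" using assms(2) by (auto simp: Xplus_def)
  have v: "v \<in> V" using node_blocks_subset_HV(1)[OF assms(1)] assms(2) by blast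
  from HE_neighbours(3)[OF partner(4)[OF v, unfolded k(1)]] show ?thesis
    using partner(1)[OF v] k(1)
    by (auto simp: HV_simps Yplus_def Xminus_def Zplus_def)
qed

lemma partner_Xminus:
  assumes "i \<in> {1..n}" and "v \<in> Xminus i"
  shows "\<pi> v \<in> Yminus i \<union> Xplus i \<union> Zminus i"
proof -
  obtain k where k: "v = Xm i k" using assms(2) by (auto simp: Xminus_def)
  have v: "v \<in> V" using node_blocks_subset_HV(2)[OF assms(1)] assms(2) by blast
  from HE_neighbours(4)[OF partner(4)[OF v, unfolded k(1)]] show ?thesis
    using partner(1)[OF v] k(1)
    by (auto simp: HV_simps Yminus_def Xplus_def Zminus_def)
qed

lemma card_Xplus_matched_to_Yplus:
  assumes i: "i \<in> {1..n}"
  shows "card {v\<in>Xplus i. \<pi> v \<in> Yplus i} = gdeg (G - E') i"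
proof -
  have "card {v\<in>Xplus i. \<pi> v \<in> Yplus i} = card {w\<in>Yplus i. \<pi> w \<in> Xplus i}"
    by (rule card_partner_swap) (use node_blocks_subset_HV[OF i] partner(3) in blast)
  also have "{w\<in>Yplus i. \<pi> w \<in> Xplus i} = (\<lambda>e. Yp e i) ` {e\<in>G - E'. i \<in> e}"
  proof (intro set_eqI iffI)
    fix w assume "w \<in> {w\<in>Yplus i. \<pi> w \<in> Xplus i}"
    then obtain e where "w = Yp e i" "e \<in> pairs n - E'" "i \<in> e" "\<pi> (Yp e i) \<in> Xplus i"
      by (auto simp: Yplus_def)
    then show "w \<in> (\<lambda>e. Yp e i) ` {e\<in>G - E'. i \<in> e}" using Yp_partner_in_Xplus_iff by blast
  next
    fix w assume "w \<in> (\<lambda>e. Yp e i) ` {e\<in>G - E'. i \<in> e}"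
    then obtain e where e: "w = Yp e i" "e \<in> G - E'" "i \<in> e" by blast
    then have "e \<in> pairs n - E'" using graph_of_matching_subset by blast
    with e show "w \<in> {w\<in>Yplus i. \<pi> w \<in> Xplus i}"
      using Yp_partner_in_Xplus_iff unfolding Yplus_def by blast
  qed
  also have "card \<dots> = card {e\<in>G - E'. i \<in> e}"
    by (simp add: card_image inj_on_def)
  also have "\<dots> = gdeg (G - E') i"
    using gdeg_eq_card_incident graph_of_matching_subset by (metis Diff_subset order_trans)
  finally show ?thesis .
qed

lemma card_Xminus_matched_to_Yminus:
  assumes i: "i \<in> {1..n}"
  shows "card {v\<in>Xminus i. \<pi> v \<in> Yminus i} = gdeg (E' - G) i"
proof -
  have "card {v\<in>Xminus i. \<pi> v \<in> Yminus i} = card {w\<in>Yminus i. \<pi> w \<in> Xminus i}"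
    by (rule card_partner_swap) (use node_blocks_subset_HV[OF i] partner(3) in blast)
  also have "{w\<in>Yminus i. \<pi> w \<in> Xminus i} = (\<lambda>e. Ym e i) ` {e\<in>E' - G. i \<in> e}"
  proof (intro set_eqI iffI)
    fix w assume "w \<in> {w\<in>Yminus i. \<pi> w \<in> Xminus i}"
    then obtain e where "w = Ym e i" "e \<in> E'" "i \<in> e" "\<pi> (Ym e i) \<in> Xminus i"
      by (auto simp: Yminus_def)
    then show "w \<in> (\<lambda>e. Ym e i) ` {e\<in>E' - G. i \<in> e}" using Ym_partner_in_Xminus_iff by blast
  next
    fix w assume "w \<in> (\<lambda>e. Ym e i) ` {e\<in>E' - G. i \<in> e}"
    then show "w \<in> {w\<in>Yminus i. \<pi> w \<in> Xminus i}"
      using Ym_partner_in_Xminus_iff unfolding Yminus_def by blast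
  qed
  also have "card \<dots> = card {e\<in>E' - G. i \<in> e}"
    by (simp add: card_image inj_on_def)
  also have "\<dots> = gdeg (E' - G) i"
    using gdeg_eq_card_incident E'_sub by (metis Diff_subset order_trans)
  finally show ?thesis .
qed

lemma card_Xplus_split:
  assumes i: "i \<in> {1..n}"
  shows "xp i = gdeg (G - E') i + card {v\<in>Xplus i. \<pi> v \<in> Xminus i}
    + card {v\<in>Xplus i. \<pi> v \<in> Zplus i}"
proof -
  have "card (Xplus i) = card {v\<in>Xplus i. \<pi> v \<in> Yplus i} + card {v\<in>Xplus i. \<pi> v \<in> Xminus i}
    + card {v\<in>Xplus i. \<pi> v \<in> Zplus i}"
    by (rule card_split_by_partner)
      (use partner_Xplus[OF i] in \<open>auto simp: Xplus_def Yplus_def Xminus_def Zplus_def\<close>)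
  then show ?thesis using card_node_blocks(1) card_Xplus_matched_to_Yplus[OF i] by simp
qed

lemma card_Xminus_split:
  assumes i: "i \<in> {1..n}"
  shows "xm i = gdeg (E' - G) i + card {v\<in>Xplus i. \<pi> v \<in> Xminus i}
    + card {v\<in>Xminus i. \<pi> v \<in> Zminus i}"
proof -
  have "card (Xminus i) = card {v\<in>Xminus i. \<pi> v \<in> Yminus i} + card {v\<in>Xminus i. \<pi> v \<in> Xplus i}
    + card {v\<in>Xminus i. \<pi> v \<in> Zminus i}"
    by (rule card_split_by_partner)
      (use partner_Xminus[OF i] in \<open>auto simp: Xminus_def Yminus_def Xplus_def Zminus_def\<close>)
  moreover have "card {v\<in>Xminus i. \<pi> v \<in> Xplus i} = card {v\<in>Xplus i. \<pi> v \<in> Xminus i}"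
    by (rule card_partner_swap) (use node_blocks_subset_HV[OF i] partner(3) in blast)
  ultimately show ?thesis using card_node_blocks(2) card_Xminus_matched_to_Yminus[OF i] by simp
qed

lemma card_matched_to_Z_le:
  assumes i: "i \<in> {1..n}"
  shows "card {v\<in>Xplus i. \<pi> v \<in> Zplus i} \<le> zp i"
    and "card {v\<in>Xminus i. \<pi> v \<in> Zminus i} \<le> zm i"
proof -
  have "card {v\<in>Xplus i. \<pi> v \<in> Zplus i} = card {w\<in>Zplus i. \<pi> w \<in> Xplus i}"
    by (rule card_partner_swap) (use node_blocks_subset_HV[OF i] partner(3) in blast)
  also have "\<dots> \<le> card (Zplus i)" by (rule card_mono) (auto simp: Zplus_def)
  finally show "card {v\<in>Xplus i. \<pi> v \<in> Zplus i} \<le> zp i" by (simp add: card_node_blocks)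
  have "card {v\<in>Xminus i. \<pi> v \<in> Zminus i} = card {w\<in>Zminus i. \<pi> w \<in> Xminus i}"
    by (rule card_partner_swap) (use node_blocks_subset_HV[OF i] partner(3) in blast)
  also have "\<dots> \<le> card (Zminus i)" by (rule card_mono) (auto simp: Zminus_def)
  finally show "card {v\<in>Xminus i. \<pi> v \<in> Zminus i} \<le> zm i" by (simp add: card_node_blocks)
qed

lemma degree_in_bounds:
  assumes i: "i \<in> {1..n}"
  shows "gdeg G i \<in> {L i..R i}"
proof -
  have "gdeg G i + gdeg (E' - G) i = gdeg E' i + gdeg (G - E') i"
    by (rule gdeg_add_remove[OF graph_of_matching_subset E'_sub])
  moreover have "int (zp i) = \<sigma> i - int (L i)" "int (zm i) = int (R i) - \<sigma> i"
    using sig_bounds[OF i] by (simp_all add: nzp_def nzm_def)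
  ultimately show ?thesis
    using card_Xplus_split[OF i] card_Xminus_split[OF i] card_matched_to_Z_le[OF i]
    by (simp add: sig_def)
qed

end

section \<open>From a feasible subgraph to a perfect matching of H\<close>

definition enum_set :: "'a set \<Rightarrow> nat \<Rightarrow> 'a" where
  "enum_set A = (SOME h. bij_betw h {..<card A} A)"

definition enum_index :: "'a set \<Rightarrow> 'a \<Rightarrow> nat" where
  "enum_index A = inv_into {..<card A} (enum_set A)"

lemma bij_betw_enum_set:
  assumes "finite A"
  shows "bij_betw (enum_set A) {..<card A} A"
proof -
  obtain h where "bij_betw h {0..<card A} A" using ex_bij_betw_nat_finite[OF assms] by blast
  then have "\<exists>h. bij_betw h {..<card A} A" by (auto simp: atLeast0LessThan)
  then show ?thesis unfolding enum_set_def by (rule someI_ex)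
qed

lemma enum_set_in: "finite A \<Longrightarrow> k < card A \<Longrightarrow> enum_set A k \<in> A"
  using bij_betw_apply[OF bij_betw_enum_set] by blast

lemma enum_index_less: "finite A \<Longrightarrow> a \<in> A \<Longrightarrow> enum_index A a < card A"
  unfolding enum_index_def
  using inv_into_into[of a "enum_set A" "{..<card A}"] bij_betw_imp_surj_on[OF bij_betw_enum_set]
  by blast

lemma enum_set_index: "finite A \<Longrightarrow> a \<in> A \<Longrightarrow> enum_set A (enum_index A a) = a"
  unfolding enum_index_def by (rule bij_betw_inv_into_right[OF bij_betw_enum_set])

lemma enum_index_set: "finite A \<Longrightarrow> k < card A \<Longrightarrow> enum_index A (enum_set A k) = k"
  unfolding enum_index_def by (simp add: bij_betw_inv_into_left[OF bij_betw_enum_set])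

(* a, r: numbers of pairs added and removed at a node of degree d in G' and g in the new graph;
   X, Y: sizes of its blocks X\<^sup>+ and X\<^sup>-; s: its \<sigma>. *)
lemma block_sizes_arith:
  fixes a r d g l u X Y :: nat and s :: int
  assumes "g + r = d + a" "a \<le> X" "r \<le> Y" "s = int d + int X - int Y" "l \<le> g" "g \<le> u"
  shows "a + (X - a - nat (s - int g)) + nat (s - int g) = X"
    and "r + (X - a - nat (s - int g)) + nat (int g - s) = Y"
    and "nat (s - int g) \<le> nat (s - int l)" and "nat (int g - s) \<le> nat (int u - s)"
  using assms by (auto split: nat_diff_split)

locale deg_constrained_subgraph = deg_constrained +
  fixes E :: "nat set set"
  assumes E_sub: "E \<subseteq> pairs n"
    and E_deg: "\<forall>i\<in>{1..n}. gdeg E i \<in> {L i..R i}"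
begin

definition added :: "nat \<Rightarrow> nat set set" where "added i = {e\<in>E - E'. i \<in> e}"
definition removed :: "nat \<Rightarrow> nat set set" where "removed i = {e\<in>E' - E. i \<in> e}"

definition z_plus_used :: "nat \<Rightarrow> nat" where "z_plus_used i = nat (\<sigma> i - int (gdeg E i))"
definition z_minus_used :: "nat \<Rightarrow> nat" where "z_minus_used i = nat (int (gdeg E i) - \<sigma> i)"
definition x_pairs :: "nat \<Rightarrow> nat" where "x_pairs i = xp i - card (added i) - z_plus_used i"

lemma finite_added: "finite (added i)" and finite_removed: "finite (removed i)"
  using finite_subset[OF _ finite_pairs] E_sub E'_sub unfolding added_def removed_def by auto

lemma card_added: "card (added i) = gdeg (E - E') i"
  using gdeg_eq_card_incident[of "E - E'" n i] E_sub unfolding added_def by fastforce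

lemma card_removed: "card (removed i) = gdeg (E' - E) i"
  using gdeg_eq_card_incident[of "E' - E" n i] E'_sub unfolding removed_def by fastforce

lemma block_sizes:
  assumes i: "i \<in> {1..n}"
  shows "card (added i) + x_pairs i + z_plus_used i = xp i"
    and "card (removed i) + x_pairs i + z_minus_used i = xm i"
    and "z_plus_used i \<le> zp i" and "z_minus_used i \<le> zm i"
proof -
  have degs: "gdeg E i + gdeg (E' - E) i = gdeg E' i + gdeg (E - E') i"
    by (rule gdeg_add_remove[OF E_sub E'_sub])
  have "gdeg (E - E') i \<le> gdeg E i" "gdeg (E' - E) i \<le> gdeg E' i"
    by (rule gdeg_mono; use E_sub E'_sub in blast)+
  moreover have "gdeg (E - E') i + gdeg E' i \<le> n - 1" "gdeg (E' - E) i + gdeg E i \<le> n - 1"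
    by (rule gdeg_disjoint_le[OF _ _ i]; use E_sub E'_sub in blast)+
  moreover have LR: "L i \<le> gdeg E i" "gdeg E i \<le> R i" using E_deg i by auto
  ultimately have "gdeg (E - E') i \<le> xp i" "gdeg (E' - E) i \<le> xm i"
    by (simp_all add: nxp_def nxm_def)
  from block_sizes_arith[OF degs this sig_def LR]
  show "card (added i) + x_pairs i + z_plus_used i = xp i"
    and "card (removed i) + x_pairs i + z_minus_used i = xm i"
    and "z_plus_used i \<le> zp i" and "z_minus_used i \<le> zm i"
    unfolding card_added card_removed x_pairs_def z_plus_used_def z_minus_used_def nzp_def nzm_def
    by simp_all
qed

fun partial_partner :: "hnode \<Rightarrow> hnode" where
  "partial_partner (Ym e i) =
     (if e \<in> E then Ym e (other_end e i) else Xm i (enum_index (removed i) e))"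
| "partial_partner (Yp e i) =
     (if e \<in> E then Xp i (enum_index (added i) e) else Yp e (other_end e i))"
| "partial_partner (Xp i k) =
     (if k < card (added i) then Yp (enum_set (added i) k) i
      else if k < card (added i) + x_pairs i then Xm i (k - card (added i) + card (removed i))
      else if k < card (added i) + x_pairs i + z_plus_used i
        then Zp i (k - card (added i) - x_pairs i)
      else Xp i k)"
| "partial_partner (Xm i k) =
     (if k < card (removed i) then Ym (enum_set (removed i) k) i
      else if k < card (removed i) + x_pairs i then Xp i (k - card (removed i) + card (added i))
      else if k < card (removed i) + x_pairs i + z_minus_used i
        then Zm i (k - card (removed i) - x_pairs i)
      else Xm i k)"
| "partial_partner (Zp i k) =
     (if k < z_plus_used i then Xp i (card (added i) + x_pairs i + k) else Zp i k)"
| "partial_partner (Zm i k) =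
     (if k < z_minus_used i then Xm i (card (removed i) + x_pairs i + k) else Zm i k)"
| "partial_partner Zhat = Zhat"

lemma partial_partner_Ym:
  assumes v: "Ym e i \<in> V"
  shows "partial_partner (Ym e i) \<noteq> Ym e i \<and> partial_partner (Ym e i) \<in> V
    \<and> partial_partner (partial_partner (Ym e i)) = Ym e i \<and> {Ym e i, partial_partner (Ym e i)} \<in> Ed"
proof -
  have ei: "e \<in> E'" "i \<in> e" using v by (auto simp: HV_simps)
  then have ep: "e \<in> pairs n" using E'_sub by blast
  have i: "i \<in> {1..n}" using pairs_subset[OF ep] ei(2) by blast
  let ?j = "other_end e i"
  have j: "e = {i, ?j}" "?j \<noteq> i" "other_end e ?j = i"
    using other_end_card_2[OF card_pairs[OF ep] ei(2)] by auto
  show ?thesis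
  proof (cases "e \<in> E")
    case True
    have "{Ym e i, Ym e ?j} \<in> Ed" using HE_intros(1)[OF ei(1) j(2)[symmetric] j(1)] by simp
    then show ?thesis using True j ei by (auto simp: HV_simps)
  next
    case False
    then have r: "e \<in> removed i" unfolding removed_def using ei by auto
    let ?k = "enum_index (removed i) e"
    have k: "?k < card (removed i)" "enum_set (removed i) ?k = e"
      using enum_index_less[OF finite_removed r] enum_set_index[OF finite_removed r] by auto
    then have "?k < xm i" using block_sizes(2)[OF i] by linarith
    then have x: "Xm i ?k \<in> V0" using i by (simp add: HV0_simps)
    have "{Xm i ?k, Ym e i} \<in> Ed" using HE_intros(4)[OF x] ei by (simp add: HV0_simps)
    then show ?thesis using False k x by (auto simp: insert_commute HV_def)
  qed
qed

lemma partial_partner_Yp: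
  assumes v: "Yp e i \<in> V"
  shows "partial_partner (Yp e i) \<noteq> Yp e i \<and> partial_partner (Yp e i) \<in> V
    \<and> partial_partner (partial_partner (Yp e i)) = Yp e i \<and> {Yp e i, partial_partner (Yp e i)} \<in> Ed"
proof -
  have ei: "e \<in> pairs n - E'" "i \<in> e" using v by (auto simp: HV_simps)
  have i: "i \<in> {1..n}" using pairs_subset ei by blast
  let ?j = "other_end e i"
  have j: "e = {i, ?j}" "?j \<noteq> i" "other_end e ?j = i"
    using other_end_card_2[OF card_pairs ei(2)] ei(1) by auto
  show ?thesis
  proof (cases "e \<in> E")
    case False
    have "{Yp e i, Yp e ?j} \<in> Ed" using HE_intros(2)[OF ei(1) j(2)[symmetric] j(1)] by simp
    then show ?thesis using False j ei by (auto simp: HV_simps)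
  next
    case True
    then have a: "e \<in> added i" unfolding added_def using ei by auto
    let ?k = "enum_index (added i) e"
    have k: "?k < card (added i)" "enum_set (added i) ?k = e"
      using enum_index_less[OF finite_added a] enum_set_index[OF finite_added a] by auto
    then have "?k < xp i" using block_sizes(1)[OF i] by linarith
    then have x: "Xp i ?k \<in> V0" using i by (simp add: HV0_simps)
    have "{Xp i ?k, Yp e i} \<in> Ed" using HE_intros(3)[OF x] ei by (simp add: HV0_simps)
    then show ?thesis using True k x by (auto simp: insert_commute HV_def)
  qed
qed

lemma partial_partner_Xp:
  assumes v: "Xp i k \<in> V"
  shows "partial_partner (Xp i k) \<noteq> Xp i k \<and> partial_partner (Xp i k) \<in> V
    \<and> partial_partner (partial_partner (Xp i k)) = Xp i k \<and> {Xp i k, partial_partner (Xp i k)} \<in> Ed"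
proof -
  have i: "i \<in> {1..n}" and k: "k < xp i" using v by (auto simp: HV_simps)
  have v0: "Xp i k \<in> V0" using i k by (simp add: HV0_simps)
  note blocks = block_sizes[OF i]
  consider (Y) "k < card (added i)" | (X) "\<not> k < card (added i)" "k < card (added i) + x_pairs i"
    | (Z) "\<not> k < card (added i) + x_pairs i" "k < card (added i) + x_pairs i + z_plus_used i"
    using k blocks(1) by linarith
  then show ?thesis
  proof cases
    case Y
    let ?e = "enum_set (added i) k"
    have "?e \<in> added i" using enum_set_in[OF finite_added Y] .
    then have e: "?e \<in> E" "?e \<notin> E'" "i \<in> ?e" "?e \<in> pairs n" unfolding added_def using E_sub by auto
    then have y: "Yp ?e i \<in> V0" by (simp add: HV0_simps)
    have "{Xp i k, Yp ?e i} \<in> Ed" by (rule HE_intros(3)[OF v0 y])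
    then show ?thesis using Y e y enum_index_set[OF finite_added Y] by (auto simp: HV_def)
  next
    case X
    let ?l = "k - card (added i) + card (removed i)"
    have x: "Xm i ?l \<in> V0" using i X blocks(2) by (simp add: HV0_simps)
    have "{Xp i k, Xm i ?l} \<in> Ed" by (rule HE_intros(5)[OF v0 x])
    then show ?thesis using X x by (auto simp: HV_def)
  next
    case Z
    let ?m = "k - card (added i) - x_pairs i"
    have z: "Zp i ?m \<in> V0" using i Z blocks(3) by (simp add: HV0_simps)
    have "{Zp i ?m, Xp i k} \<in> Ed" by (rule HE_intros(6)[OF z v0])
    then show ?thesis using Z z by (auto simp: insert_commute HV_def)
  qed
qed

lemma partial_partner_Xm:
  assumes v: "Xm i k \<in> V"
  shows "partial_partner (Xm i k) \<noteq> Xm i k \<and> partial_partner (Xm i k) \<in> V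
    \<and> partial_partner (partial_partner (Xm i k)) = Xm i k \<and> {Xm i k, partial_partner (Xm i k)} \<in> Ed"
proof -
  have i: "i \<in> {1..n}" and k: "k < xm i" using v by (auto simp: HV_simps)
  have v0: "Xm i k \<in> V0" using i k by (simp add: HV0_simps)
  note blocks = block_sizes[OF i]
  consider (Y) "k < card (removed i)" | (X) "\<not> k < card (removed i)" "k < card (removed i) + x_pairs i"
    | (Z) "\<not> k < card (removed i) + x_pairs i" "k < card (removed i) + x_pairs i + z_minus_used i"
    using k blocks(2) by linarith
  then show ?thesis
  proof cases
    case Y
    let ?e = "enum_set (removed i) k"
    have "?e \<in> removed i" using enum_set_in[OF finite_removed Y] .
    then have e: "?e \<notin> E" "?e \<in> E'" "i \<in> ?e" unfolding removed_def by auto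
    then have y: "Ym ?e i \<in> V0" by (simp add: HV0_simps)
    have "{Xm i k, Ym ?e i} \<in> Ed" by (rule HE_intros(4)[OF v0 y])
    then show ?thesis using Y e y enum_index_set[OF finite_removed Y] by (auto simp: HV_def)
  next
    case X
    let ?l = "k - card (removed i) + card (added i)"
    have x: "Xp i ?l \<in> V0" using i X blocks(1) by (simp add: HV0_simps)
    have "{Xp i ?l, Xm i k} \<in> Ed" by (rule HE_intros(5)[OF x v0])
    then show ?thesis using X x by (auto simp: insert_commute HV_def)
  next
    case Z
    let ?m = "k - card (removed i) - x_pairs i"
    have z: "Zm i ?m \<in> V0" using i Z blocks(4) by (simp add: HV0_simps)
    have "{Zm i ?m, Xm i k} \<in> Ed" by (rule HE_intros(7)[OF z v0])
    then show ?thesis using Z z by (auto simp: insert_commute HV_def)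
  qed
qed

lemma partial_partner_moved:
  assumes v: "v \<in> V" and moved: "partial_partner v \<noteq> v"
  shows "partial_partner v \<in> V \<and> partial_partner (partial_partner v) = v \<and> {v, partial_partner v} \<in> Ed"
proof (cases v)
  case (Zp i k)
  have i: "i \<in> {1..n}" and "k < zp i" using v Zp by (auto simp: HV_simps)
  then have v0: "Zp i k \<in> V0" by (simp add: HV0_simps)
  have k: "k < z_plus_used i" using moved Zp by (auto split: if_splits)
  then have x: "Xp i (card (added i) + x_pairs i + k) \<in> V0"
    using i block_sizes(1)[OF i] by (simp add: HV0_simps)
  show ?thesis using HE_intros(6)[OF v0 x] Zp k x by (auto simp: HV_def)
next
  case (Zm i k)
  have i: "i \<in> {1..n}" and "k < zm i" using v Zm by (auto simp: HV_simps)
  then have v0: "Zm i k \<in> V0" by (simp add: HV0_simps)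
  have k: "k < z_minus_used i" using moved Zm by (auto split: if_splits)
  then have x: "Xm i (card (removed i) + x_pairs i + k) \<in> V0"
    using i block_sizes(2)[OF i] by (simp add: HV0_simps)
  show ?thesis using HE_intros(7)[OF v0 x] Zm k x by (auto simp: HV_def)
next
  case (Ym e i) then show ?thesis using v partial_partner_Ym by blast
next
  case (Yp e i) then show ?thesis using v partial_partner_Yp by blast
next
  case (Xp i k) then show ?thesis using v partial_partner_Xp by blast
next
  case (Xm i k) then show ?thesis using v partial_partner_Xm by blast
next
  case Zhat then show ?thesis using moved by simp
qed

lemma partial_partner_fixed:
  assumes "v \<in> V" and "partial_partner v = v"
  shows "v \<in> Z \<or> v = Zhat"
  using assms partial_partner_Ym partial_partner_Yp partial_partner_Xp partial_partner_Xm
  by (cases v) (auto simp: HV_simps Znodes_def)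

lemma fixed_points_adjacent:
  assumes "v \<in> V" "w \<in> V" "partial_partner v = v" "partial_partner w = w" "v \<noteq> w"
  shows "{v, w} \<in> Ed"
proof -
  consider "v \<in> Z" "w \<in> Z" | "v = Zhat" "w \<in> Z" | "v \<in> Z" "w = Zhat"
    using partial_partner_fixed[OF assms(1,3)] partial_partner_fixed[OF assms(2,4)] assms(5)
    by blast
  then show ?thesis
  proof cases
    case 1
    then show ?thesis using HE_intros(8) assms(5) by blast
  next
    case 2
    then show ?thesis using HE_intros(9) assms(1) by blast
  next
    case 3
    then show ?thesis using HE_intros(9)[of v] assms(2) by (simp add: insert_commute)
  qed
qed

lemma matching_of_subgraph:
  obtains \<pi> where "matching_involution V Ed \<pi>" and "graph_of_matching n E' \<pi> = E"
proof -
  have "\<forall>v\<in>V. partial_partner v \<noteq> v \<longrightarrow> partial_partner v \<in> V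
      \<and> partial_partner (partial_partner v) = v \<and> {v, partial_partner v} \<in> Ed"
    using partial_partner_moved by blast
  moreover have "\<forall>v\<in>V. \<forall>w\<in>V. partial_partner v = v \<longrightarrow> partial_partner w = w \<longrightarrow> v \<noteq> w
      \<longrightarrow> {v, w} \<in> Ed"
    using fixed_points_adjacent by blast
  ultimately obtain \<pi> where \<pi>: "matching_involution V Ed \<pi>"
    and agree: "\<forall>v\<in>V. partial_partner v \<noteq> v \<longrightarrow> \<pi> v = partial_partner v"
    by (rule extend_partial_involution[OF finite_HV even_card_HV])
  have Ym: "\<pi> (Ym e i) = partial_partner (Ym e i)" if "e \<in> E'" "i \<in> e" for e i
    using agree partial_partner_Ym that by (simp add: HV_simps)
  have Yp: "\<pi> (Yp e i) = partial_partner (Yp e i)" if "e \<in> pairs n - E'" "i \<in> e" for e i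
    using agree partial_partner_Yp that by (simp add: HV_simps)
  have "e \<in> graph_of_matching n E' \<pi> \<longleftrightarrow> e \<in> E" for e
  proof (cases "e \<in> pairs n")
    case False
    then show ?thesis using E_sub E'_sub by (auto simp: graph_of_matching_def)
  next
    case True
    then obtain i j where e: "e = {i, j}" "i \<noteq> j" by (rule pairsE)
    show ?thesis
    proof (cases "e \<in> E'")
      case True
      then show ?thesis using Ym[OF True] e by (simp add: graph_of_matching_def)
    next
      case False
      then show ?thesis using Yp[of e] \<open>e \<in> pairs n\<close> e by (simp add: graph_of_matching_def)
    qed
  qed
  then have "graph_of_matching n E' \<pi> = E" by blast
  with \<pi> show ?thesis using that by blast
qed

end

theorem theorem4p1:
  fixes n :: nat and E' :: "nat set set" and c :: "nat set \<Rightarrow> real" and B :: real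
    and L R :: "nat \<Rightarrow> nat"
  assumes "E' \<subseteq> pairs n"
    and "\<forall>e\<in>pairs n. c e \<ge> 0"
    and "B \<ge> 0"
    and "\<forall>i\<in>{1..n}. L i \<le> R i \<and> R i \<le> n - 1"
  shows "(\<exists>M. perfect_matching (HV n E' L R) (HE n E' L R) M \<and> mcost c M \<le> B)
     \<longleftrightarrow> (\<exists>E. E \<subseteq> pairs n \<and> (\<Sum>e\<in>(E - E') \<union> (E' - E). c e) \<le> B
              \<and> (\<forall>i\<in>{1..n}. gdeg E i \<in> {L i..R i}))"
proof -
  interpret deg_constrained n E' L R
    using assms(1,4) by unfold_locales
  show ?thesis
  proof
    assume "\<exists>M. perfect_matching V Ed M \<and> mcost c M \<le> B"
    then obtain M where M: "perfect_matching V Ed M" "mcost c M \<le> B" by blast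
    obtain \<pi> where \<pi>: "matching_involution V Ed \<pi>" and M_eq: "M = (\<lambda>v. {v, \<pi> v}) ` V"
      using involution_of_perfect_matching[OF M(1)] HE_edge_card_2 by blast
    interpret deg_constrained_matching n E' L R \<pi>
      using \<pi> by unfold_locales
    show "\<exists>E. E \<subseteq> pairs n \<and> (\<Sum>e\<in>(E - E') \<union> (E' - E). c e) \<le> B
              \<and> (\<forall>i\<in>{1..n}. gdeg E i \<in> {L i..R i})"
      using graph_of_matching_subset degree_in_bounds mcost_matching M(2) M_eq by auto
  next
    assume "\<exists>E. E \<subseteq> pairs n \<and> (\<Sum>e\<in>(E - E') \<union> (E' - E). c e) \<le> B
              \<and> (\<forall>i\<in>{1..n}. gdeg E i \<in> {L i..R i})"
    then obtain E where E: "E \<subseteq> pairs n" "(\<Sum>e\<in>(E - E') \<union> (E' - E). c e) \<le> B"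
      "\<forall>i\<in>{1..n}. gdeg E i \<in> {L i..R i}" by blast
    interpret deg_constrained_subgraph n E' L R E
      using E by unfold_locales
    obtain \<pi> where \<pi>: "matching_involution V Ed \<pi>" and G: "graph_of_matching n E' \<pi> = E"
      by (rule matching_of_subgraph)
    interpret matching: deg_constrained_matching n E' L R \<pi>
      using \<pi> by unfold_locales
    show "\<exists>M. perfect_matching V Ed M \<and> mcost c M \<le> B"
      using perfect_matching_of_involution[OF \<pi>] matching.mcost_matching G E(2) by auto
  qed
qed

end
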